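(* Let $\alpha,\gamma$ be weak compositions. The following are equivalent: (1) $\mathsf{rajcode}(\alpha)=\mathsf{rajcode}(\gamma)$; (2) $\mathsf{dark}(\alpha)=\mathsf{dark}(\gamma)$; (3) the underlying diagrams (ignoring labels) of $\mathsf{snow}(D(\alpha))$ and $\mathsf{snow}(D(\gamma))$ are equal.
   Context: A weak composition is an infinite sequence of nonnegative integers with finitely many positive entries; $D(\alpha)=\{(r,c):1\le c\le\alpha_r\}$ where $(r,c)$ is the cell in row $r$ (row 1 on top), column $c$. For a diagram $D$ (finite subset of $\mathbb{Z}_{>0}^2$), $\mathsf{snow}(D)$ is built by iterating through rows from bottom to top: in row $r$, take the rightmost cell $(r,c)\in D$ such that column $c$ contains no dark cloud yet; if it exists label it a dark cloud and add snowflake cells at $(r',c)$ for all $r'<r$ with $(r',c)\notin D$. $\mathsf{dark}(D)$ is the set of dark-cloud cells, $\mathsf{rajcode}(D)$ is the weak composition whose $i$-th entry is the number of cells of $\mathsf{snow}(D)$ in row $i$; $\mathsf{rajcode}(\alpha)=\mathsf{rajcode}(D(\alpha))$, $\mathsf{dark}(\alpha)=\mathsf{dark}(D(\alpha))$. *)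

theory Defs
  imports Main
begin

text \<open>Cells are pairs (r, c): row r (row 1 on top), column c; both positive.
A weak composition is represented as a function nat => nat whose i-th entry
(i >= 1) is alpha i; the unused index 0 is fixed to 0 and the support is finite.\<close>

definition weak_comp :: "(nat \<Rightarrow> nat) \<Rightarrow> bool" where
  "weak_comp \<alpha> \<longleftrightarrow> \<alpha> 0 = 0 \<and> finite {i. \<alpha> i \<noteq> 0}"

definition diag :: "(nat \<Rightarrow> nat) \<Rightarrow> (nat \<times> nat) set" where
  "diag \<alpha> = {(r, c). 1 \<le> r \<and> 1 \<le> c \<and> c \<le> \<alpha> r}"

text \<open>Dark clouds after processing rows M, M-1, ..., M-k+1 (bottom to top).\<close>
fun dark_rows :: "(nat \<times> nat) set \<Rightarrow> nat \<Rightarrow> nat \<Rightarrow> (nat \<times> nat) set" where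
  "dark_rows D M 0 = {}"
| "dark_rows D M (Suc k) =
     (let S = dark_rows D M k;
          r = M - k;
          cols = {c. (r, c) \<in> D \<and> c \<notin> snd ` S}
      in if cols = {} then S else insert (r, Max cols) S)"

definition dark :: "(nat \<times> nat) set \<Rightarrow> (nat \<times> nat) set" where
  "dark D = (let M = Max (insert 0 (fst ` D)) in dark_rows D M M)"

text \<open>Underlying diagram of snow(D): cells of D plus snowflakes above dark clouds.\<close>
definition snow :: "(nat \<times> nat) set \<Rightarrow> (nat \<times> nat) set" where
  "snow D = D \<union> {(r', c). \<exists>r. (r, c) \<in> dark D \<and> 1 \<le> r' \<and> r' < r \<and> (r', c) \<notin> D}"

definition rajcode :: "(nat \<times> nat) set \<Rightarrow> nat \<Rightarrow> nat" where
  "rajcode D i = (if i = 0 then 0 else card {c. (i, c) \<in> snow D})"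

end

theory Submission
  imports Defs
begin

(* Let U be the set of columns of dark clouds strictly below row r. Row r of snow(D(alpha))
   is {1..alpha r} \<union> U, and the dark cloud of row r sits in the rightmost column of
   {1..alpha r} - U, if there is one. Because rows of D(alpha) are initial intervals, the set
   {1..alpha r} \<union> U is determined by its cardinality as well as by that rightmost free column.
   So once U is known, any one of rajcode, dark clouds and snow diagram in row r determines the
   other two; and U for the row above is determined by the dark clouds of the rows already
   processed. A downward induction over the rows gives the equivalences. *)

definition row :: "(nat \<times> nat) set \<Rightarrow> nat \<Rightarrow> nat set" where
  "row D r = {c. (r, c) \<in> D}"

definition dark_cols_below :: "(nat \<times> nat) set \<Rightarrow> nat \<Rightarrow> nat set" where
  "dark_cols_below D r = {c. \<exists>s>r. (s, c) \<in> dark D}"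

definition rightmost :: "nat set \<Rightarrow> nat set" where
  "rightmost A = (if A = {} then {} else {Max A})"

lemma set_eq_iff_rows: "D = D' \<longleftrightarrow> (\<forall>r. row D r = row D' r)"
  by (auto simp: row_def)

lemma row_diag: "\<alpha> 0 = 0 \<Longrightarrow> row (diag \<alpha>) r = {1..\<alpha> r}"
  by (cases "r = 0") (auto simp: row_def diag_def)

lemma finite_diag: "weak_comp \<alpha> \<Longrightarrow> finite (diag \<alpha>)"
proof -
  assume "weak_comp \<alpha>"
  then have "finite (SIGMA r:{i. \<alpha> i \<noteq> 0}. {1..\<alpha> r})"
    by (auto simp: weak_comp_def)
  moreover have "diag \<alpha> \<subseteq> (SIGMA r:{i. \<alpha> i \<noteq> 0}. {1..\<alpha> r})"
    by (auto simp: diag_def)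
  ultimately show ?thesis
    by (rule finite_subset[rotated])
qed

lemma Un_atLeastAtMost_eq_if_card_eq:
  fixes U :: "nat set"
  assumes "finite U" and "card ({1..a} \<union> U) = card ({1..b} \<union> U)"
  shows "{1..a} \<union> U = {1..b} \<union> U"
proof -
  have "{1..m} \<union> U = {1..n} \<union> U"
    if "m \<le> n" and "card ({1..m} \<union> U) = card ({1..n} \<union> U)" for m n :: nat
    using that \<open>finite U\<close> by (intro card_subset_eq) auto
  then show ?thesis
    using assms(2) by (metis nat_le_linear)
qed

lemma Un_atLeastAtMost_Max_free:
  fixes U :: "nat set"
  assumes "{1..a} - U \<noteq> {}"
  shows "{1..a} \<union> U = {1..Max ({1..a} - U)} \<union> U"
proof -
  have "Max ({1..a} - U) \<in> {1..a} - U"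
    using assms by (intro Max_in) auto
  moreover have "c \<le> Max ({1..a} - U)" if "c \<in> {1..a} - U" for c
    using that by simp
  ultimately show ?thesis
    by fastforce
qed

lemma Un_atLeastAtMost_eq_if_rightmost_eq:
  fixes U :: "nat set"
  assumes "rightmost ({1..a} - U) = rightmost ({1..b} - U)"
  shows "{1..a} \<union> U = {1..b} \<union> U"
proof (cases "{1..a} - U = {}")
  case True
  with assms have "{1..b} - U = {}"
    by (auto simp: rightmost_def split: if_splits)
  with True show ?thesis
    by blast
next
  case False
  with assms have "{1..b} - U \<noteq> {}" and "Max ({1..a} - U) = Max ({1..b} - U)"
    by (auto simp: rightmost_def split: if_splits)
  with False show ?thesis
    by (metis Un_atLeastAtMost_Max_free)
qed

lemma finite_dark_rows: "finite (dark_rows D M k)"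
  by (induction k) (auto simp: Let_def)

lemma finite_dark: "finite (dark D)"
  by (simp add: dark_def finite_dark_rows)

lemma dark_rows_fst_bounds:
  "k \<le> M \<Longrightarrow> x \<in> dark_rows D M k \<Longrightarrow> M - k < fst x \<and> fst x \<le> M"
proof (induction k)
  case (Suc k)
  then show ?case
    by (cases "x \<in> dark_rows D M k") (auto simp: Let_def split: if_splits)
qed simp

lemma dark_rows_eq_restrict:
  assumes "k \<le> K" and "K \<le> M"
  shows "dark_rows D M k = {x \<in> dark_rows D M K. M - k < fst x}"
  using assms
proof (induction K rule: dec_induct)
  case base
  then show ?case
    using dark_rows_fst_bounds[of k M] by auto
next
  case (step n)
  have "\<not> M - k < M - n"
    using step.hyps by arith
  with step show ?case
    by (auto simp: Let_def)
qed

lemma dark_fst_pos: "x \<in> dark D \<Longrightarrow> 0 < fst x"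
  using dark_rows_fst_bounds[of "Max (insert 0 (fst ` D))" "Max (insert 0 (fst ` D))" x D]
  by (simp add: dark_def)

lemma row_dark:
  assumes "finite D" and "0 < r"
  shows "row (dark D) r = rightmost (row D r - dark_cols_below D r)"
proof -
  define M where "M = Max (insert 0 (fst ` D))"
  have dark_eq: "dark D = dark_rows D M M"
    by (simp add: dark_def M_def)
  have fst_le_M: "fst x \<le> M" if "x \<in> D" for x
    using that assms(1) by (auto simp: M_def)
  show ?thesis
  proof (cases "M < r")
    case True
    then have "row D r = {}" and "row (dark D) r = {}"
      using fst_le_M dark_rows_fst_bounds[of M M _ D] by (fastforce simp: row_def dark_eq)+
    then show ?thesis
      by (simp add: rightmost_def)
  next
    case False
    define k where "k = M - r"
    have r: "r = M - k" and "k < M"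
      using False assms(2) by (auto simp: k_def)
    define S where "S = dark_rows D M k"
    have S_eq: "S = {x \<in> dark D. r < fst x}"
      using dark_rows_eq_restrict[of k M M D] \<open>k < M\<close> by (simp add: S_def dark_eq r)
    have "row (dark D) r = row (dark_rows D M (Suc k)) r"
      using dark_rows_eq_restrict[of "Suc k" M M D] \<open>k < M\<close> by (auto simp: row_def dark_eq r)
    also have "\<dots> = rightmost (row D r - snd ` S)"
    proof -
      have "row S r = {}"
        using S_eq by (auto simp: row_def)
      moreover have "dark_rows D M (Suc k) =
          (if row D r - snd ` S = {} then S else insert (r, Max (row D r - snd ` S)) S)"
        by (simp only: dark_rows.simps Let_def S_def r row_def set_diff_eq mem_Collect_eq)
      ultimately show ?thesis
        by (auto simp: rightmost_def row_def)
    qed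
    also have "snd ` S = dark_cols_below D r"
      using S_eq by (force simp: dark_cols_below_def)
    finally show ?thesis .
  qed
qed

lemma dark_cols_below_Suc:
  "dark_cols_below D r = dark_cols_below D (Suc r) \<union> row (dark D) (Suc r)"
  by (auto simp: dark_cols_below_def row_def) (metis Suc_lessI, meson Suc_lessD)

lemma finite_dark_cols_below: "finite (dark_cols_below D r)"
proof -
  have "dark_cols_below D r \<subseteq> snd ` dark D"
    by (force simp: dark_cols_below_def)
  then show ?thesis
    using finite_dark finite_subset by blast
qed

lemma row_snow: "0 < r \<Longrightarrow> row (snow D) r = row D r \<union> dark_cols_below D r"
  by (auto simp: row_def snow_def dark_cols_below_def)

lemma row_snow_0: "row (snow D) 0 = row D 0"
  by (auto simp: row_def snow_def)

lemma dark_eqI: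
  assumes "\<And>r. 0 < r \<Longrightarrow> dark_cols_below D r = dark_cols_below D' r \<Longrightarrow>
             row (dark D) r = row (dark D') r"
  shows "dark D = dark D'"
proof -
  obtain N where N: "\<And>x. x \<in> dark D \<union> dark D' \<Longrightarrow> fst x \<le> N"
    using finite_dark[of D] finite_dark[of D']
    by (metis finite_Un finite_imageI finite_nat_set_iff_bounded_le imageI)
  have top: "dark_cols_below D r = dark_cols_below D' r" if "N \<le> r" for r
    using N that by (fastforce simp: dark_cols_below_def)
  have "dark_cols_below D r = dark_cols_below D' r" if "r \<le> N" for r
    using that
  proof (induction r rule: inc_induct)
    case (step n)
    then show ?case
      using assms[of "Suc n"] by (metis dark_cols_below_Suc zero_less_Suc)
  qed (use top in simp)
  with top have below: "dark_cols_below D r = dark_cols_below D' r" for r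
    by (metis nat_le_linear)
  have "row (dark D) r = row (dark D') r" for r
  proof (cases "r = 0")
    case True
    then show ?thesis
      using dark_fst_pos by (fastforce simp: row_def)
  qed (use assms below in simp)
  then show ?thesis
    by (simp add: set_eq_iff_rows)
qed

lemma row_dark_diag:
  assumes "weak_comp \<alpha>" and "0 < r"
  shows "row (dark (diag \<alpha>)) r = rightmost ({1..\<alpha> r} - dark_cols_below (diag \<alpha>) r)"
  using assms row_dark[OF finite_diag] row_diag by (simp add: weak_comp_def)

lemma row_snow_diag:
  assumes "weak_comp \<alpha>" and "0 < r"
  shows "row (snow (diag \<alpha>)) r = {1..\<alpha> r} \<union> dark_cols_below (diag \<alpha>) r"
  using assms row_snow row_diag by (simp add: weak_comp_def)

lemma dark_eq_if_rajcode_eq: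
  assumes "weak_comp \<alpha>" and "weak_comp \<gamma>" and "rajcode (diag \<alpha>) = rajcode (diag \<gamma>)"
  shows "dark (diag \<alpha>) = dark (diag \<gamma>)"
proof (rule dark_eqI)
  fix r :: nat
  assume "0 < r"
  define U where "U = dark_cols_below (diag \<alpha>) r"
  assume "dark_cols_below (diag \<alpha>) r = dark_cols_below (diag \<gamma>) r"
  then have "row (snow (diag \<beta>)) r = {1..\<beta> r} \<union> U"
    if "\<beta> \<in> {\<alpha>, \<gamma>}" for \<beta>
    using that assms(1,2) \<open>0 < r\<close> by (auto simp: U_def row_snow_diag)
  moreover have "card (row (snow (diag \<alpha>)) r) = card (row (snow (diag \<gamma>)) r)"
    using assms(3) \<open>0 < r\<close> by (metis rajcode_def row_def not_gr0)
  ultimately have "card ({1..\<alpha> r} \<union> U) = card ({1..\<gamma> r} \<union> U)"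
    by simp
  then have "{1..\<alpha> r} \<union> U = {1..\<gamma> r} \<union> U"
    by (rule Un_atLeastAtMost_eq_if_card_eq[OF finite_dark_cols_below[of "diag \<alpha>" r, folded U_def]])
  then have "{1..\<alpha> r} - U = {1..\<gamma> r} - U"
    by blast
  then show "row (dark (diag \<alpha>)) r = row (dark (diag \<gamma>)) r"
    using assms(1,2) \<open>0 < r\<close> \<open>dark_cols_below _ r = _\<close> by (simp add: row_dark_diag U_def)
qed

lemma snow_eq_if_dark_eq:
  assumes "weak_comp \<alpha>" and "weak_comp \<gamma>" and "dark (diag \<alpha>) = dark (diag \<gamma>)"
  shows "snow (diag \<alpha>) = snow (diag \<gamma>)"
proof -
  have "row (snow (diag \<alpha>)) r = row (snow (diag \<gamma>)) r" for r
  proof (cases "r = 0")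
    case True
    then show ?thesis
      using assms(1,2) by (simp add: row_snow_0 row_diag weak_comp_def)
  next
    case False
    define U where "U = dark_cols_below (diag \<alpha>) r"
    have U: "U = dark_cols_below (diag \<gamma>) r"
      using assms(3) by (simp add: U_def dark_cols_below_def)
    have "rightmost ({1..\<alpha> r} - U) = row (dark (diag \<alpha>)) r"
      using assms(1) False by (simp add: row_dark_diag U_def)
    also have "\<dots> = row (dark (diag \<gamma>)) r"
      using assms(3) by simp
    also have "\<dots> = rightmost ({1..\<gamma> r} - U)"
      using assms(2) False by (simp add: row_dark_diag U)
    finally have "{1..\<alpha> r} \<union> U = {1..\<gamma> r} \<union> U"
      by (rule Un_atLeastAtMost_eq_if_rightmost_eq)
    then show ?thesis
      using assms(1,2) False by (simp add: row_snow_diag U_def U[symmetric])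
  qed
  then show ?thesis
    by (simp add: set_eq_iff_rows)
qed

theorem proposition4p16:
  fixes \<alpha> \<gamma> :: "nat \<Rightarrow> nat"
  assumes "weak_comp \<alpha>" and "weak_comp \<gamma>"
  shows "(rajcode (diag \<alpha>) = rajcode (diag \<gamma>) \<longleftrightarrow> dark (diag \<alpha>) = dark (diag \<gamma>))
       \<and> (dark (diag \<alpha>) = dark (diag \<gamma>) \<longleftrightarrow> snow (diag \<alpha>) = snow (diag \<gamma>))"
proof -
  have "snow (diag \<alpha>) = snow (diag \<gamma>) \<Longrightarrow> rajcode (diag \<alpha>) = rajcode (diag \<gamma>)"
    by (intro ext) (simp add: rajcode_def)
  then show ?thesis
    using dark_eq_if_rajcode_eq[OF assms] snow_eq_if_dark_eq[OF assms] by blast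
qed

end
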